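(* Let $c\in(0,1)$ be a constant with the following property: for every Poisson Binomial distribution $q$ on $\mathbb Z_{\geq 0}$ with mode $k^*$, one has $q(k^* )\geq \frac{c}{\sqrt{k^*+1}}$. Let $p:\mathbb Z_{\geq 0}\to\mathbb R_{\geq 0}$ be a Poisson Binomial distribution and let $k\geq 1$ be an integer with $$p(k)<\frac{c}{12\sqrt{3(k+1)}}.$$ Set $P_{<k}=\sum_{i<k}p(i)$ and $P_{>k}=\sum_{i>k}p(i)$. Then: (1) if the mode of $p$ is less than $k$, then $P_{>k}\leq \frac12-\frac{c}{12}$; (2) if the mode of $p$ is greater than $k$, then $P_{<k}\leq \frac12-\frac{c}{12}$.
   Context: A Poisson Binomial distribution is the distribution on $\mathbb Z_{\geq 0}$ of $\sum_{i=1}^N b_i$ where $N$ is a nonnegative integer and $b_1,\dots,b_N$ are independent Bernoulli random variables with arbitrary success probabilities $\pi_i\in[0,1]$. The mode of a distribution $p$ on $\mathbb Z_{\geq 0}$ is the smallest integer maximizing $p$ (ties are broken by taking the smaller value). *)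

theory Defs
  imports "HOL-Probability.Probability"
begin

fun poibin :: "real list \<Rightarrow> nat pmf" where
  "poibin [] = return_pmf 0"
| "poibin (q # qs) =
     bind_pmf (bernoulli_pmf q) (\<lambda>b. bind_pmf (poibin qs) (\<lambda>s. return_pmf (of_bool b + s)))"

definition is_poibin :: "nat pmf \<Rightarrow> bool" where
  "is_poibin p \<longleftrightarrow> (\<exists>qs. set qs \<subseteq> {0..1} \<and> p = poibin qs)"

definition pmf_mode :: "nat pmf \<Rightarrow> nat" where
  "pmf_mode p = (LEAST k. \<forall>j. pmf p j \<le> pmf p k)"

end

theory Submission
  imports Defs
begin

text \<open>A Poisson Binomial distribution is log-concave, hence unimodal. Let \<open>m\<close> be its mode,
  so \<open>p(m) \<ge> c / sqrt (m + 1)\<close>. For the tail beyond \<open>k\<close> on the side away from \<open>m\<close>,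
  log-concavity gives \<open>p(m) p(i) \<le> p(k) p(i')\<close>, where \<open>i'\<close> is \<open>i\<close> shifted by \<open>|k - m|\<close> towards
  \<open>m\<close>; summing, \<open>p(m) \<cdot> tail \<le> p(k)\<close>. If \<open>m \<le> 3k + 2\<close> the smallness of \<open>p(k)\<close> then forces
  the tail below \<open>1/12\<close>. If \<open>m \<ge> 3k\<close>, the pmf increases on \<open>[0, 3k)\<close>, so \<open>P(<k)\<close> is at
  most the masses of \<open>[k, 2k)\<close> and \<open>[2k, 3k)\<close>, hence at most \<open>1/3\<close>.\<close>

lemma pmf_poibin_Cons:
  assumes "0 \<le> q" "q \<le> 1"
  shows "pmf (poibin (q # qs)) n =
     (1 - q) * pmf (poibin qs) n + q * (if n = 0 then 0 else pmf (poibin qs) (n - 1))"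
proof -
  have shifted: "pmf (bind_pmf (poibin qs) (\<lambda>s. return_pmf (of_bool b + s))) n =
      (if b then (if n = 0 then 0 else pmf (poibin qs) (n - 1)) else pmf (poibin qs) n)" for b
  proof -
    have "bind_pmf (poibin qs) (\<lambda>s. return_pmf (of_bool b + s)) = map_pmf (\<lambda>s. of_bool b + s) (poibin qs)"
      by (simp add: map_pmf_def)
    moreover have "(\<lambda>s. of_bool b + s) -` {n} = (if b then (if n = 0 then {} else {n - 1}) else {n})"
      by auto
    ultimately show ?thesis by (simp add: pmf_map measure_pmf_single)
  qed
  have "pmf (poibin (q # qs)) n =
      (\<integral>b. pmf (bind_pmf (poibin qs) (\<lambda>s. return_pmf (of_bool b + s))) n \<partial>bernoulli_pmf q)"
    by (simp only: poibin.simps pmf_bind)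
  also have "\<dots> = (1 - q) * pmf (poibin qs) n + q * (if n = 0 then 0 else pmf (poibin qs) (n - 1))"
    using assms by (simp only: shifted) simp
  finally show ?thesis .
qed

lemma set_pmf_poibin_subset: "set_pmf (poibin qs) \<subseteq> {..length qs}"
  by (induction qs) (auto simp: set_bind_pmf)

text \<open>The ratio form of log-concavity. For nonnegative sequences with internal zeros it is
  strictly stronger than \<open>f i ^ 2 \<ge> f (i - 1) * f (i + 1)\<close>, and it is the form that is
  preserved by convolution with a Bernoulli distribution.\<close>
definition log_concave_seq :: "(int \<Rightarrow> real) \<Rightarrow> bool" where
  "log_concave_seq f \<longleftrightarrow> (\<forall>a b s. 0 \<le> s \<longrightarrow> a \<le> b \<longrightarrow> f a * f (b + s) \<le> f (a + s) * f b)"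

lemma log_concave_seqD:
  "log_concave_seq f \<Longrightarrow> 0 \<le> s \<Longrightarrow> a \<le> b \<Longrightarrow> f a * f (b + s) \<le> f (a + s) * f b"
  unfolding log_concave_seq_def by blast

lemma log_concave_seq_convolve_step:
  assumes f: "log_concave_seq f" and "0 \<le> \<alpha>" "0 \<le> \<beta>"
  shows "log_concave_seq (\<lambda>i. \<alpha> * f i + \<beta> * f (i - 1))"
  unfolding log_concave_seq_def
proof (intro allI impI)
  fix a b s :: int assume s: "0 \<le> s" and ab: "a \<le> b"
  show "(\<alpha> * f a + \<beta> * f (a - 1)) * (\<alpha> * f (b + s) + \<beta> * f (b + s - 1))
        \<le> (\<alpha> * f (a + s) + \<beta> * f (a + s - 1)) * (\<alpha> * f b + \<beta> * f (b - 1))"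
  proof (cases "s = 0")
    case True then show ?thesis by simp
  next
    case False
    \<comment> \<open>Each of the four products in the expansion is compared by log-concavity with shift
      \<open>s\<close>, \<open>s\<close>, \<open>s - 1\<close> and \<open>s + 1\<close> respectively.\<close>
    have "f a * f (b + s) \<le> f (a + s) * f b"
      using log_concave_seqD[OF f s ab] .
    then have aa: "\<alpha> * \<alpha> * (f a * f (b + s)) \<le> \<alpha> * \<alpha> * (f (a + s) * f b)"
      using \<open>0 \<le> \<alpha>\<close> by (simp add: mult_left_mono)
    have "f (a - 1) * f (b - 1 + s) \<le> f (a - 1 + s) * f (b - 1)"
      using log_concave_seqD[OF f s] ab by simp
    then have bb: "\<beta> * \<beta> * (f (a - 1) * f (b + s - 1)) \<le> \<beta> * \<beta> * (f (a + s - 1) * f (b - 1))"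
      using \<open>0 \<le> \<beta>\<close> by (simp add: mult_left_mono algebra_simps)
    have "f a * f (b + (s - 1)) \<le> f (a + (s - 1)) * f b"
      using log_concave_seqD[OF f _ ab, of "s - 1"] s False by simp
    then have ab1: "\<alpha> * \<beta> * (f a * f (b + s - 1)) \<le> \<alpha> * \<beta> * (f (a + s - 1) * f b)"
      using \<open>0 \<le> \<alpha>\<close> \<open>0 \<le> \<beta>\<close> by (simp add: mult_left_mono algebra_simps)
    have "f (a - 1) * f (b - 1 + (s + 1)) \<le> f (a - 1 + (s + 1)) * f (b - 1)"
      using log_concave_seqD[OF f, of "s + 1" "a - 1" "b - 1"] s ab by simp
    then have ab2: "\<alpha> * \<beta> * (f (a - 1) * f (b + s)) \<le> \<alpha> * \<beta> * (f (a + s) * f (b - 1))"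
      using \<open>0 \<le> \<alpha>\<close> \<open>0 \<le> \<beta>\<close> by (simp add: mult_left_mono)
    show ?thesis using aa bb ab1 ab2 by (simp add: algebra_simps)
  qed
qed

definition pmf_int :: "nat pmf \<Rightarrow> int \<Rightarrow> real" where
  "pmf_int p i = (if i < 0 then 0 else pmf p (nat i))"

lemma log_concave_pmf_int_poibin:
  "set qs \<subseteq> {0..1} \<Longrightarrow> log_concave_seq (pmf_int (poibin qs))"
proof (induction qs)
  case Nil
  show ?case unfolding log_concave_seq_def pmf_int_def by (auto simp: indicator_def)
next
  case (Cons q qs)
  then have q: "0 \<le> q" "q \<le> 1" and IH: "log_concave_seq (pmf_int (poibin qs))" by auto
  have "pmf_int (poibin (q # qs)) = (\<lambda>i. (1 - q) * pmf_int (poibin qs) i + q * pmf_int (poibin qs) (i - 1))"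
    unfolding pmf_int_def pmf_poibin_Cons[OF q] by (auto simp: nat_diff_distrib)
  then show ?case using log_concave_seq_convolve_step[OF IH] q by simp
qed

lemma log_concave_pmf_intD:
  assumes "log_concave_seq (pmf_int p)" "a \<le> b"
  shows "pmf p a * pmf p (b + s) \<le> pmf p (a + s) * pmf p b"
  using log_concave_seqD[OF assms(1), of "int s" "int a" "int b"] assms(2)
  unfolding pmf_int_def by (simp add: nat_add_distrib)

lemma pmf_le_pmf_mode:
  assumes "finite (set_pmf p)"
  shows "pmf p j \<le> pmf p (pmf_mode p)"
proof -
  obtain x where x: "x \<in> set_pmf p" "pmf p x = Max (pmf p ` set_pmf p)"
    using Max_in[of "pmf p ` set_pmf p"] assms set_pmf_not_empty by fastforce
  have "\<forall>j. pmf p j \<le> pmf p x"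
  proof
    fix j show "pmf p j \<le> pmf p x"
      using x assms pmf_nonneg[of p x] by (cases "j \<in> set_pmf p") (auto simp: set_pmf_eq intro: Max_ge)
  qed
  then show ?thesis unfolding pmf_mode_def by (rule LeastI2) blast
qed

lemma pmf_mono_below_maximiser:
  assumes lc: "log_concave_seq (pmf_int p)" and max: "\<And>j. pmf p j \<le> pmf p m"
    and "i \<le> j" "j \<le> m"
  shows "pmf p i \<le> pmf p j"
proof -
  have ascent: "pmf p i \<le> pmf p (Suc i)" if "i < m" for i
  proof (rule ccontr)
    assume "\<not> ?thesis"
    then have drop: "pmf p (Suc i) < pmf p i" by simp
    then have "pmf p i > 0" using pmf_nonneg[of p "Suc i"] by linarith
    \<comment> \<open>A strict descent at \<open>i\<close> propagates: \<open>p(j+1)/p(j) \<le> p(i+1)/p(i) < 1\<close>.\<close>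
    have "pmf p j \<le> pmf p (Suc i)" if "Suc i \<le> j" for j
      using that
    proof (induction j rule: dec_induct)
      case base then show ?case by simp
    next
      case (step j)
      have "pmf p i * pmf p (j + 1) \<le> pmf p (i + 1) * pmf p j"
        using log_concave_pmf_intD[OF lc, of i j 1] step by simp
      also have "\<dots> \<le> pmf p (Suc i) * pmf p (Suc i)"
        using step by (simp add: mult_left_mono)
      also have "\<dots> \<le> pmf p i * pmf p (Suc i)"
        using drop by (intro mult_right_mono) auto
      finally show ?case using \<open>pmf p i > 0\<close> by simp
    qed
    from this[of m] show False using \<open>i < m\<close> drop max[of i] by simp
  qed
  show ?thesis
    using assms(3,4)
  proof (induction j rule: dec_induct)
    case (step j)
    then show ?case using ascent[of j] by simp
  qed simp
qed

lemma mult_measure_pmf_le_of_inj: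
  fixes p :: "nat pmf"
  assumes "finite A" "inj_on h A" "\<And>i. i \<in> A \<Longrightarrow> x * pmf p i \<le> y * pmf p (h i)" "0 \<le> y"
  shows "x * measure p A \<le> y"
proof -
  have "x * measure p A = (\<Sum>i\<in>A. x * pmf p i)"
    using assms(1) by (simp add: measure_measure_pmf_finite sum_distrib_left)
  also have "\<dots> \<le> (\<Sum>i\<in>A. y * pmf p (h i))"
    using assms(3) by (rule sum_mono)
  also have "\<dots> = y * measure p (h ` A)"
    using assms(1,2) by (simp add: sum.reindex sum_distrib_left measure_measure_pmf_finite)
  also have "\<dots> \<le> y"
    using assms(4) by (simp add: mult_left_le)
  finally show ?thesis .
qed

lemma upper_tail_le_log_concave:
  assumes lc: "log_concave_seq (pmf_int p)" and fin: "finite (set_pmf p)" and "m < k"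
  shows "pmf p m * measure p {k<..} \<le> pmf p k"
proof -
  let ?A = "{k<..} \<inter> set_pmf p"
  have "pmf p m * measure p ?A \<le> pmf p k"
  proof (rule mult_measure_pmf_le_of_inj[where h = "\<lambda>i. i - (k - m)"])
    fix i assume "i \<in> ?A"
    then have "m \<le> i - (k - m)" and i: "i - (k - m) + (k - m) = i" and k: "m + (k - m) = k"
      using \<open>m < k\<close> by auto
    then show "pmf p m * pmf p i \<le> pmf p k * pmf p (i - (k - m))"
      using log_concave_pmf_intD[OF lc, of m "i - (k - m)" "k - m"] by (simp only: i k)
  qed (use fin in \<open>auto simp: inj_on_def\<close>)
  then show ?thesis by (simp add: measure_Int_set_pmf)
qed

lemma lower_tail_le_log_concave:
  assumes lc: "log_concave_seq (pmf_int p)" and "k < m"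
  shows "pmf p m * measure p {..<k} \<le> pmf p k"
proof (rule mult_measure_pmf_le_of_inj[where h = "\<lambda>i. i + (m - k)"])
  fix i assume "i \<in> {..<k}"
  then show "pmf p m * pmf p i \<le> pmf p k * pmf p (i + (m - k))"
    using log_concave_pmf_intD[OF lc, of i k "m - k"] \<open>k < m\<close> by (simp add: mult.commute)
qed (auto simp: inj_on_def)

lemma measure_lessThan_le_one_third_of_mono:
  fixes p :: "nat pmf"
  assumes mono: "\<And>i j. i \<le> j \<Longrightarrow> j < 3 * k \<Longrightarrow> pmf p i \<le> pmf p j"
  shows "measure p {..<k} \<le> 1 / 3"
proof -
  let ?f = "pmf p"
  have shift: "sum ?f {..<n + l} = sum ?f {..<n} + sum (\<lambda>i. ?f (n + i)) {..<l}" for n l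
    by (induction l) (simp_all add: add.assoc)
  have split: "sum ?f {..<3 * k} = sum ?f {..<k} + sum (\<lambda>i. ?f (k + i)) {..<k} + sum (\<lambda>i. ?f (2 * k + i)) {..<k}"
    using shift[of "2 * k" k] shift[of k k] by (simp add: numeral_3_eq_3 mult_2 add.assoc)
  have "sum ?f {..<k} \<le> sum (\<lambda>i. ?f (k + i)) {..<k}"
    by (intro sum_mono mono) auto
  moreover have "sum ?f {..<k} \<le> sum (\<lambda>i. ?f (2 * k + i)) {..<k}"
    by (intro sum_mono mono) auto
  moreover have "sum ?f {..<3 * k} \<le> 1"
    using measure_pmf.prob_le_1[of p "{..<3 * k}"] by (simp add: measure_measure_pmf_finite)
  ultimately have "3 * sum ?f {..<k} \<le> 1"
    using split by linarith
  then show ?thesis by (simp add: measure_measure_pmf_finite)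
qed

lemma lower_tail_le_one_third_log_concave:
  assumes lc: "log_concave_seq (pmf_int p)" and fin: "finite (set_pmf p)"
    and "3 * k \<le> pmf_mode p"
  shows "measure p {..<k} \<le> 1 / 3"
proof (rule measure_lessThan_le_one_third_of_mono)
  fix i j assume "i \<le> j" "j < 3 * k"
  then show "pmf p i \<le> pmf p j"
    using pmf_mono_below_maximiser[OF lc pmf_le_pmf_mode[OF fin]] assms(3) by simp
qed

lemma tail_lt_one_twelfth:
  assumes "0 < c" "m \<le> 3 * k + 2" "c / sqrt (real m + 1) \<le> pm" "0 \<le> pk"
    and "pk < c / (12 * sqrt (3 * (real k + 1)))" and "pm * T \<le> pk"
  shows "T < 1 / 12"
proof -
  have "pm * T \<le> pk" by fact
  also have "\<dots> < c / (12 * sqrt (3 * (real k + 1)))" by fact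
  also have "\<dots> \<le> c / (12 * sqrt (real m + 1))"
    using assms(1,2) by (intro divide_left_mono mult_left_mono) auto
  also have "\<dots> \<le> pm * (1 / 12)"
    using assms(3) by simp
  finally have "pm * T < pm * (1 / 12)" .
  moreover have "0 < c / sqrt (real m + 1)"
    using assms(1) by simp
  then have "0 < pm"
    using assms(3) by linarith
  ultimately show ?thesis by simp
qed

theorem lemma2:
  fixes c :: real and p :: "nat pmf" and k :: nat
  assumes c_range: "0 < c" "c < 1"
    and c_prop: "\<And>q. is_poibin q \<Longrightarrow> pmf q (pmf_mode q) \<ge> c / sqrt (real (pmf_mode q) + 1)"
    and p_pb: "is_poibin p"
    and k_ge: "k \<ge> 1"
    and small: "pmf p k < c / (12 * sqrt (3 * (real k + 1)))"
  shows "(pmf_mode p < k \<longrightarrow> measure_pmf.prob p {k<..} \<le> 1/2 - c/12)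
       \<and> (pmf_mode p > k \<longrightarrow> measure_pmf.prob p {..<k} \<le> 1/2 - c/12)"
proof -
  obtain qs where qs: "set qs \<subseteq> {0..1}" and p: "p = poibin qs"
    using p_pb unfolding is_poibin_def by blast
  have lc: "log_concave_seq (pmf_int p)"
    using log_concave_pmf_int_poibin[OF qs] p by simp
  have fin: "finite (set_pmf p)"
    using set_pmf_poibin_subset[of qs] p finite_subset by blast
  define m where "m = pmf_mode p"
  have mode: "c / sqrt (real m + 1) \<le> pmf p m"
    using c_prop[OF p_pb] m_def by simp
  note tail = tail_lt_one_twelfth[OF c_range(1) _ mode pmf_nonneg small]
  have twelfth: "1 / 12 \<le> 1/2 - c/12" and third: "1 / 3 \<le> 1/2 - c/12"
    using c_range by simp_all
  show ?thesis
  proof (intro conjI impI; fold m_def)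
    assume "m < k"
    then have "measure p {k<..} < 1 / 12"
      using tail[OF _ upper_tail_le_log_concave[OF lc fin]] by simp
    then show "measure p {k<..} \<le> 1/2 - c/12" using twelfth by simp
  next
    assume "k < m"
    show "measure p {..<k} \<le> 1/2 - c/12"
    proof (cases "m \<le> 3 * k + 2")
      case True
      then have "measure p {..<k} < 1 / 12"
        using tail[OF _ lower_tail_le_log_concave[OF lc \<open>k < m\<close>]] by simp
      then show ?thesis using twelfth by simp
    next
      case False
      then have "measure p {..<k} \<le> 1 / 3"
        using lower_tail_le_one_third_log_concave[OF lc fin, of k] m_def by simp
      then show ?thesis using third by simp
    qed
  qed
qed

end
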